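(* Let $f:\mathbb{R}^d\to\mathbb{R}$ be twice differentiable and strictly pseudoconvex, with (unique) global minimizer $x_*$. Define \[ g(x)\coloneqq f(x_* )+\int_0^1\frac{\langle\nabla f(x_*+t(x-x_* )),\,x-x_*\rangle}{t}\,dt . \] Then $g$ is well defined and star-convex, i.e. for all $x\in\mathbb{R}^d$ and $\lambda\in[0,1]$, \[ g\bigl(x_*+\lambda(x-x_* )\bigr)\le(1-\lambda)\,g(x_* )+\lambda\,g(x). \]
   Context: $f$ is strictly pseudoconvex if for all $x\neq y$, $f(y)\le f(x)\Rightarrow\langle\nabla f(x),y-x\rangle<0$. *)

theory Defs
  imports "HOL-Analysis.Analysis"
begin

text \<open>Strict pseudoconvexity w.r.t. a gradient map grad
  (GDERIV f x :> grad x for all x).\<close>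
definition strictly_pseudoconvex :: "('a::real_inner \<Rightarrow> real) \<Rightarrow> ('a \<Rightarrow> 'a) \<Rightarrow> bool" where
  "strictly_pseudoconvex f grad \<longleftrightarrow>
     (\<forall>x y. x \<noteq> y \<longrightarrow> f y \<le> f x \<longrightarrow> grad x \<bullet> (y - x) < 0)"

definition g_integrand :: "('a::real_inner \<Rightarrow> 'a) \<Rightarrow> 'a \<Rightarrow> 'a \<Rightarrow> real \<Rightarrow> real" where
  "g_integrand grad xs x t = (grad (xs + t *\<^sub>R (x - xs)) \<bullet> (x - xs)) / t"

definition g_fun :: "('a::euclidean_space \<Rightarrow> real) \<Rightarrow> ('a \<Rightarrow> 'a) \<Rightarrow> 'a \<Rightarrow> 'a \<Rightarrow> real" where
  "g_fun f grad xs x = f xs + integral {0..1} (g_integrand grad xs x)"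

end

theory Submission
  imports Defs
begin

text \<open>Write \<open>v = x - xs\<close> and \<open>k t = \<langle>\<nabla>f(xs + t v), v\<rangle> / t\<close>. Since \<open>\<nabla>f(xs) = 0\<close> and
  \<open>\<nabla>f\<close> is differentiable, \<open>k\<close> extends continuously to \<open>t = 0\<close>, so \<open>g\<close> is well defined;
  strict pseudoconvexity makes \<open>k\<close> nonnegative on \<open>[0,1]\<close>. Substituting \<open>s = \<lambda> t\<close> gives
  \<open>g(xs + \<lambda> v) - f(xs) = \<lambda> \<integral>\<^sub>0\<^sup>\<lambda> k \<le> \<lambda> \<integral>\<^sub>0\<^sup>1 k = \<lambda> (g(x) - g(xs))\<close>.\<close>

lemma gderiv_zero_at_global_min:
  fixes f :: "'a::real_inner \<Rightarrow> real"
  assumes "GDERIV f x :> D" and "\<And>y. f x \<le> f y"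
  shows "D = 0"
proof -
  have "(\<lambda>h. h \<bullet> D) = (\<lambda>h. 0)"
    using has_derivative_local_min[OF assms(1)[unfolded gderiv_def]] assms(2) by simp
  then have "D \<bullet> D = 0" by meson
  then show ?thesis by simp
qed

lemma strictly_pseudoconvex_grad_inner_pos:
  assumes "strictly_pseudoconvex f grad" and "\<And>y. f xs \<le> f y" and "x \<noteq> xs"
  shows "grad x \<bullet> (x - xs) > 0"
proof -
  have "grad x \<bullet> (xs - x) < 0"
    using assms unfolding strictly_pseudoconvex_def by metis
  then show ?thesis by (simp add: inner_diff_right)
qed

lemma continuous_on_difference_quotient_at_zero:
  fixes h :: "real \<Rightarrow> real"
  assumes cont: "continuous_on UNIV h" and deriv: "(h has_real_derivative D) (at 0)"
    and "h 0 = 0"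
  shows "continuous_on UNIV (\<lambda>t. if t = 0 then D else h t / t)" (is "continuous_on _ ?k")
proof -
  have "isCont ?k t" for t
  proof (cases "t = 0")
    case True
    have "((\<lambda>s. h s / s) \<longlongrightarrow> D) (at 0)"
      using deriv \<open>h 0 = 0\<close> unfolding DERIV_def by simp
    then have "(?k \<longlongrightarrow> D) (at 0)"
      by (rule Lim_transform_eventually) (auto simp: eventually_at_filter)
    then show ?thesis using True by (simp add: isCont_def)
  next
    case False
    have "isCont (\<lambda>s. h s / s) t"
      using cont False by (intro continuous_intros) (auto simp: continuous_on_eq_continuous_at)
    moreover have "\<forall>\<^sub>F s in nhds t. h s / s = ?k s"
    proof -
      have "\<forall>\<^sub>F s in nhds t. s \<noteq> 0"
        using eventually_nhds_in_open[of "-{0}" t] False by auto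
      then show ?thesis by (rule eventually_mono) simp
    qed
    ultimately show ?thesis using isCont_cong by fastforce
  qed
  then show ?thesis by (simp add: continuous_at_imp_continuous_on)
qed

lemma difference_quotient_integrable:
  fixes h :: "real \<Rightarrow> real"
  assumes "continuous_on UNIV h" and "h differentiable (at 0)" and "h 0 = 0"
  shows "(\<lambda>t. h t / t) integrable_on {a..b}"
proof -
  obtain D where "(h has_real_derivative D) (at 0)"
    using assms(2) unfolding real_differentiable_def by blast
  then have "continuous_on UNIV (\<lambda>t. if t = 0 then D else h t / t)"
    using assms by (intro continuous_on_difference_quotient_at_zero)
  then have "(\<lambda>t. if t = 0 then D else h t / t) integrable_on {a..b}"
    by (intro integrable_continuous_real) (auto intro: continuous_on_subset)
  then show ?thesis
    by (rule integrable_spike_finite[of "{0}", rotated 2]) auto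
qed

lemma g_integrand_integrable:
  assumes "\<And>y. grad differentiable (at y)" and "grad xs = 0"
  shows "g_integrand grad xs x integrable_on {a..b}"
proof -
  define h where "h t = grad (xs + t *\<^sub>R (x - xs)) \<bullet> (x - xs)" for t
  have differentiable: "h differentiable (at t)" for t
  proof -
    have "(\<lambda>t. xs + t *\<^sub>R (x - xs)) differentiable (at t)" by (intro derivative_intros)
    from differentiable_chain_at[OF this assms(1)]
    have "(\<lambda>t. grad (xs + t *\<^sub>R (x - xs))) differentiable (at t)"
      by (simp add: o_def)
    then show ?thesis unfolding h_def by (intro differentiable_inner) auto
  qed
  then have "continuous_on UNIV h"
    by (simp add: differentiable_imp_continuous_within continuous_at_imp_continuous_on)
  moreover have "h 0 = 0" using assms(2) by (simp add: h_def)
  ultimately have "(\<lambda>t. h t / t) integrable_on {a..b}"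
    by (rule difference_quotient_integrable[OF _ differentiable])
  then show ?thesis by (simp add: h_def g_integrand_def[abs_def])
qed

lemma g_integrand_nonneg:
  assumes "strictly_pseudoconvex f grad" and "\<And>y. f xs \<le> f y" and "0 \<le> t"
  shows "0 \<le> g_integrand grad xs x t"
proof (cases "t = 0 \<or> x = xs")
  case True
  then show ?thesis by (auto simp: g_integrand_def)
next
  case False
  with assms(3) have "t > 0" by simp
  define y where "y = xs + t *\<^sub>R (x - xs)"
  have "y \<noteq> xs" using False by (simp add: y_def)
  then have "0 < grad y \<bullet> (y - xs)"
    by (rule strictly_pseudoconvex_grad_inner_pos[OF assms(1,2)])
  then have "0 < t * (grad y \<bullet> (x - xs))" by (simp add: y_def)
  with \<open>t > 0\<close> have "0 < grad y \<bullet> (x - xs)" by (simp add: zero_less_mult_iff)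
  with \<open>t > 0\<close> show ?thesis by (simp add: g_integrand_def y_def)
qed

lemma g_integrand_self: "g_integrand grad xs xs = (\<lambda>t. 0)"
  by (simp add: fun_eq_iff g_integrand_def)

lemma g_integrand_along_ray:
  "g_integrand grad xs (xs + l *\<^sub>R (x - xs)) = (\<lambda>t. l\<^sup>2 * g_integrand grad xs x (l * t))"
  by (cases "l = 0") (simp_all add: fun_eq_iff g_integrand_def power2_eq_square mult.commute)

lemma integral_rescale_unit_interval:
  fixes k :: "real \<Rightarrow> real"
  assumes "0 \<le> l"
  shows "l * integral {0..1} (\<lambda>t. k (l * t)) = integral {0..l} k"
proof (cases "l = 0")
  case False
  with assms have "l > 0" by simp
  then show ?thesis
    using integral_stretch_real[where m=l and f=k and a=0 and b=l] by simp
qed simp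

theorem theorem4:
  fixes f :: "'a::euclidean_space \<Rightarrow> real" and grad :: "'a \<Rightarrow> 'a" and xs :: 'a
  assumes grad: "\<And>x. GDERIV f x :> grad x"
    and twice: "\<And>x. grad differentiable (at x)"
    and spc: "strictly_pseudoconvex f grad"
    and minimizer: "\<And>x. f xs \<le> f x"
  shows "(\<forall>x. g_integrand grad xs x integrable_on {0..1}) \<and>
         (\<forall>x. \<forall>l::real. 0 \<le> l \<and> l \<le> 1 \<longrightarrow>
            g_fun f grad xs (xs + l *\<^sub>R (x - xs))
              \<le> (1 - l) * g_fun f grad xs xs + l * g_fun f grad xs x)"
proof (intro conjI allI impI)
  have "grad xs = 0" using gderiv_zero_at_global_min grad minimizer by blast
  then have integrable: "g_integrand grad xs x integrable_on {a..b}" for x a b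
    using g_integrand_integrable twice by blast
  then show "g_integrand grad xs x integrable_on {0..1}" for x .
  fix x and l :: real
  assume l: "0 \<le> l \<and> l \<le> 1"
  let ?k = "g_integrand grad xs x"
  have "g_fun f grad xs (xs + l *\<^sub>R (x - xs)) = f xs + l * (l * integral {0..1} (\<lambda>t. ?k (l * t)))"
    by (simp add: g_fun_def g_integrand_along_ray power2_eq_square mult.assoc)
  also have "\<dots> = f xs + l * integral {0..l} ?k"
    using l integral_rescale_unit_interval by simp
  also have "\<dots> \<le> f xs + l * integral {0..1} ?k"
    using l integrable g_integrand_nonneg[OF spc minimizer]
    by (intro add_left_mono mult_left_mono integral_subset_le) auto
  also have "\<dots> = (1 - l) * g_fun f grad xs xs + l * g_fun f grad xs x"
    by (simp add: g_fun_def g_integrand_self algebra_simps)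
  finally show "g_fun f grad xs (xs + l *\<^sub>R (x - xs))
      \<le> (1 - l) * g_fun f grad xs xs + l * g_fun f grad xs x" .
qed

end
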